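(* Let $(\mathsf{X},\mu)$, $(\mathsf{Y},\nu)$ be Polish probability spaces, $c:\mathsf{X}\times\mathsf{Y}\to[0,\infty)$ continuous, $\pi_\varepsilon$ the $(c,\varepsilon)$-cyclically invariant coupling for each $\varepsilon>0$ (assumed to exist), and assume $\pi_\varepsilon\to\pi_*$ weakly as $\varepsilon\to0$ for some $\pi_*\in\Pi(\mu,\nu)$. Let $\Gamma:=\operatorname{spt}\pi_*$, $\mathsf{X}_0:=\operatorname{proj}_{\mathsf{X}}\Gamma$, $\mathsf{Y}_0:=\operatorname{proj}_{\mathsf{Y}}\Gamma$. Assume that uniqueness of Kantorovich potentials holds on $\mathsf{X}_0$: for any $c$-convex functions $\psi_1,\psi_2$ on $\mathsf{X}$ with $\Gamma\subset\partial_c\psi_i$ ($i=1,2$), the difference $\psi_1-\psi_2$ is constant on $\mathsf{X}_0$. Then for any Kantorovich potential $\psi$, $$I(x,y)=c(x,y)-\psi^c(y)+\psi(x),\qquad (x,y)\in\mathsf{X}_0\times\mathsf{Y}_0.$$ In particular $I<\infty$ on $\mathsf{X}_0\times\mathsf{Y}_0$. Moreover, if $(x,y),(x',y')\in\mathsf{X}_0\times\mathsf{Y}_0$ are such that $(x',y),(x,y')\in\Gamma$, then $$I(x,y)+I(x',y')=c(x,y)+c(x',y')-c(x,y')-c(x',y).$$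
   Context: $\Pi(\mu,\nu)$ is the set of couplings of $\mu,\nu$ and $P:=\mu\otimes\nu$. A coupling $\pi$ is $(c,\varepsilon)$-cyclically invariant if $\pi\sim P$ and its density admits a version $\frac{d\pi}{dP}:\mathsf{X}\times\mathsf{Y}\to(0,\infty)$ with $\prod_{i=1}^k\frac{d\pi}{dP}(x_i,y_i)=\exp\big(-\frac1\varepsilon[\sum_{i=1}^k c(x_i,y_i)-\sum_{i=1}^k c(x_i,y_{i+1})]\big)\prod_{i=1}^k\frac{d\pi}{dP}(x_i,y_{i+1})$ for all $k$ and points, $y_{k+1}:=y_1$. $\Gamma$ is $c$-cyclically monotone. A proper function $\psi:\mathsf{X}\to(-\infty,\infty]$ is $c$-convex if $\psi(x)=\sup_{y\in\mathsf{Y}}[\zeta(y)-c(x,y)]$ for some $\zeta:\mathsf{Y}\to[-\infty,\infty]$; its $c$-conjugate is $\psi^c(y):=\inf_{x\in\mathsf{X}}[\psi(x)+c(x,y)]$ and its $c$-subdifferential is $\partial_c\psi=\{(x,y):\psi^c(y)-\psi(x)=c(x,y)\}$. A Kantorovich potential is a $c$-convex $\psi$ with $\Gamma\subset\partial_c\psi$. The function $I$ is $I(x,y):=\sup_{k\ge2}\sup_{(x_i,y_i)_{i=2}^k\subset\Gamma}\sup_{\sigma\in\Sigma(k)}\sum_{i=1}^k c(x_i,y_i)-\sum_{i=1}^k c(x_i,y_{\sigma(i)})$ with $(x_1,y_1):=(x,y)$ and $\Sigma(k)$ the permutations of $\{1,\dots,k\}$. *)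

theory Defs
  imports "HOL-Probability.Probability"
begin

definition couplings :: "'a::topological_space measure \<Rightarrow> 'b::topological_space measure
    \<Rightarrow> ('a \<times> 'b) measure set" where
  "couplings \<mu> \<nu> = {\<pi>. prob_space \<pi> \<and> sets \<pi> = sets borel \<and>
      distr \<pi> borel fst = \<mu> \<and> distr \<pi> borel snd = \<nu>}"

definition cyc_invariant ::
  "('a \<times> 'b \<Rightarrow> real) \<Rightarrow> real \<Rightarrow> 'a measure \<Rightarrow> 'b measure \<Rightarrow> ('a \<times> 'b) measure \<Rightarrow> bool" where
  "cyc_invariant c \<epsilon> \<mu> \<nu> \<pi> \<longleftrightarrow>
     absolutely_continuous (\<mu> \<Otimes>\<^sub>M \<nu>) \<pi> \<and> absolutely_continuous \<pi> (\<mu> \<Otimes>\<^sub>M \<nu>) \<and>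
     (\<exists>d :: 'a \<times> 'b \<Rightarrow> real.
        d \<in> borel_measurable (\<mu> \<Otimes>\<^sub>M \<nu>) \<and> (\<forall>z. d z > 0) \<and>
        \<pi> = density (\<mu> \<Otimes>\<^sub>M \<nu>) (\<lambda>z. ennreal (d z)) \<and>
        (\<forall>(k::nat) (xs :: nat \<Rightarrow> 'a) (ys :: nat \<Rightarrow> 'b). k \<ge> 1 \<longrightarrow>
           (\<Prod>i<k. d (xs i, ys i)) =
             exp (- (1 / \<epsilon>) * ((\<Sum>i<k. c (xs i, ys i)) - (\<Sum>i<k. c (xs i, ys (Suc i mod k)))))
             * (\<Prod>i<k. d (xs i, ys (Suc i mod k)))))"

definition weak_conv_at0 :: "(real \<Rightarrow> 'c::topological_space measure) \<Rightarrow> 'c measure \<Rightarrow> bool" where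
  "weak_conv_at0 \<pi> \<pi>0 \<longleftrightarrow>
     (\<forall>f :: 'c \<Rightarrow> real. continuous_on UNIV f \<and> bounded (range f) \<longrightarrow>
        ((\<lambda>\<epsilon>. integral\<^sup>L (\<pi> \<epsilon>) f) \<longlongrightarrow> integral\<^sup>L \<pi>0 f) (at_right 0))"

definition spt :: "'c::topological_space measure \<Rightarrow> 'c set" where
  "spt M = {z. \<forall>U. open U \<longrightarrow> z \<in> U \<longrightarrow> emeasure M U > 0}"

definition c_convex :: "('a \<times> 'b \<Rightarrow> real) \<Rightarrow> ('a \<Rightarrow> ereal) \<Rightarrow> bool" where
  "c_convex c \<psi> \<longleftrightarrow> (\<forall>x. \<psi> x \<noteq> -\<infinity>) \<and> (\<exists>x. \<psi> x \<noteq> \<infinity>) \<and>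
     (\<exists>\<zeta> :: 'b \<Rightarrow> ereal. \<forall>x. \<psi> x = (SUP y. \<zeta> y - ereal (c (x, y))))"

definition c_conj :: "('a \<times> 'b \<Rightarrow> real) \<Rightarrow> ('a \<Rightarrow> ereal) \<Rightarrow> 'b \<Rightarrow> ereal" where
  "c_conj c \<psi> y = (INF x. \<psi> x + ereal (c (x, y)))"

text \<open>c-subdifferential; psi(x) is required to be finite (so no infinity - infinity arises).\<close>
definition c_subdiff :: "('a \<times> 'b \<Rightarrow> real) \<Rightarrow> ('a \<Rightarrow> ereal) \<Rightarrow> ('a \<times> 'b) set" where
  "c_subdiff c \<psi> = {(x, y). \<psi> x < \<infinity> \<and> c_conj c \<psi> y - \<psi> x = ereal (c (x, y))}"

definition kantorovich_potential :: "('a \<times> 'b \<Rightarrow> real) \<Rightarrow> ('a \<times> 'b) set \<Rightarrow> ('a \<Rightarrow> ereal) \<Rightarrow> bool" where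
  "kantorovich_potential c \<Gamma> \<psi> \<longleftrightarrow> c_convex c \<psi> \<and> \<Gamma> \<subseteq> c_subdiff c \<psi>"

text \<open>The function I, with indices 0..k-1 (index 0 plays the role of index 1 in the paper).\<close>
definition Ifun :: "('a \<times> 'b \<Rightarrow> real) \<Rightarrow> ('a \<times> 'b) set \<Rightarrow> 'a \<Rightarrow> 'b \<Rightarrow> ereal" where
  "Ifun c \<Gamma> x y = (SUP v \<in> {ereal ((\<Sum>i<k. c (xs i, ys i)) - (\<Sum>i<k. c (xs i, ys (\<sigma> i)))) | (k::nat) (xs::nat \<Rightarrow> 'a) (ys::nat \<Rightarrow> 'b) (\<sigma>::nat \<Rightarrow> nat).
        k \<ge> 2 \<and> xs 0 = x \<and> ys 0 = y \<and> (\<forall>i\<in>{1..<k}. (xs i, ys i) \<in> \<Gamma>) \<and> \<sigma> permutes {..<k}}. v)"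

end

theory Submission
  imports Defs "HOL-Real_Asymp.Real_Asymp"
begin

text \<open>Cyclic invariance makes \<open>ln (d\<pi>\<^sub>\<epsilon>/dP) + c/\<epsilon>\<close> additively separable, so rematching the
  points of a cycle according to a permutation multiplies the product of the densities by
  \<open>exp (- gain / \<epsilon>)\<close>. By Fubini, small balls around a cycle in \<open>\<Gamma> = spt \<pi>\<^sub>*\<close> with positive gain
  would then have \<open>\<pi>\<^sub>\<epsilon>\<close>-masses whose product decays exponentially, contradicting the lower bound
  that weak convergence gives on balls around support points. So \<open>\<Gamma>\<close> is \<open>c\<close>-cyclically monotone.

  For \<open>(x\<^sub>b, y) \<in> \<Gamma>\<close>, the function \<open>x \<mapsto> I(x, y) - c(x, y)\<close> is then a Kantorovich potential
  (prolonging a cycle by a point of \<open>\<Gamma>\<close> gives the \<open>c\<close>-subdifferential inequalities), equal to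
  \<open>-c(x\<^sub>b, y)\<close> at \<open>x\<^sub>b\<close> because \<open>I(x\<^sub>b, y) = 0\<close>. Uniqueness up to constants identifies it on
  \<open>X\<^sub>0\<close> with \<open>\<psi> - \<psi>\<^sup>c(y)\<close>, which is the formula for \<open>I\<close>; finiteness and the four-point identity
  follow by evaluating it.\<close>

definition rematch_gain ::
  "('a \<times> 'b \<Rightarrow> real) \<Rightarrow> nat \<Rightarrow> (nat \<Rightarrow> 'a) \<Rightarrow> (nat \<Rightarrow> 'b) \<Rightarrow> (nat \<Rightarrow> nat) \<Rightarrow> real" where
  "rematch_gain c k xs ys \<sigma> = (\<Sum>i<k. c (xs i, ys i)) - (\<Sum>i<k. c (xs i, ys (\<sigma> i)))"

definition c_cyclically_monotone :: "('a \<times> 'b \<Rightarrow> real) \<Rightarrow> ('a \<times> 'b) set \<Rightarrow> bool" where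
  "c_cyclically_monotone c \<Gamma> \<longleftrightarrow>
     (\<forall>k xs ys \<sigma>. \<sigma> permutes {..<k} \<and> (\<forall>i<k. (xs i, ys i) \<in> \<Gamma>) \<longrightarrow> rematch_gain c k xs ys \<sigma> \<le> 0)"

section \<open>Cyclical monotonicity of the limit support\<close>

lemma sum_permutes_exchangeable:
  fixes w :: "'a \<times> 'b \<Rightarrow> 'c::ab_group_add"
  assumes exch: "\<And>x y x' y'. w (x, y) + w (x', y') = w (x, y') + w (x', y)"
    and \<sigma>: "\<sigma> permutes S"
  shows "(\<Sum>i\<in>S. w (xs i, ys (\<sigma> i))) = (\<Sum>i\<in>S. w (xs i, ys i))"
proof -
  define u :: 'a where "u = undefined"
  define v :: 'b where "v = undefined"
  have split: "w (x, y) = w (x, v) + w (u, y) - w (u, v)" for x y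
    using exch[of x y u v] by (simp add: algebra_simps)
  have "(\<Sum>i\<in>S. w (xs i, ys (\<sigma> i))) = (\<Sum>i\<in>S. w (xs i, v) + w (u, ys (\<sigma> i)) - w (u, v))"
    by (rule sum.cong[OF refl split])
  also have "\<dots> = (\<Sum>i\<in>S. w (xs i, v) + w (u, ys i) - w (u, v))"
    using sum.permute[OF \<sigma>, of "\<lambda>i. w (u, ys i)"] by (simp add: sum.distrib sum_subtractf comp_def)
  also have "\<dots> = (\<Sum>i\<in>S. w (xs i, ys i))"
    by (rule sum.cong[OF refl split[symmetric]])
  finally show ?thesis .
qed

lemma cyclic_density_permutes:
  fixes d c :: "'a \<times> 'b \<Rightarrow> real"
  assumes pos: "\<forall>z. d z > 0"
    and cyc: "\<forall>(k::nat) (xs :: nat \<Rightarrow> 'a) (ys :: nat \<Rightarrow> 'b). k \<ge> 1 \<longrightarrow>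
           (\<Prod>i<k. d (xs i, ys i)) =
             exp (- (1 / \<epsilon>) * ((\<Sum>i<k. c (xs i, ys i)) - (\<Sum>i<k. c (xs i, ys (Suc i mod k)))))
             * (\<Prod>i<k. d (xs i, ys (Suc i mod k)))"
    and \<sigma>: "\<sigma> permutes {..<k}"
  shows "(\<Prod>i<k. d (xs i, ys i)) = exp (- rematch_gain c k xs ys \<sigma> / \<epsilon>) * (\<Prod>i<k. d (xs i, ys (\<sigma> i)))"
proof -
  define w where "w z = ln (d z) + c z / \<epsilon>" for z
  have "w (x, y) + w (x', y') = w (x, y') + w (x', y)" for x y x' y'
  proof -
    have e: "d (x, y) * d (x', y') = exp (- (1 / \<epsilon>) * (c (x, y) + c (x', y') - (c (x, y') + c (x', y))))
        * (d (x, y') * d (x', y))"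
      using cyc[rule_format, of 2 "\<lambda>i. if i = 0 then x else x'" "\<lambda>i. if i = 0 then y else y'"]
      by (simp add: eval_nat_numeral lessThan_Suc algebra_simps)
    have "ln (d (x, y)) + ln (d (x', y')) = - (1 / \<epsilon>) * (c (x, y) + c (x', y') - (c (x, y') + c (x', y)))
        + (ln (d (x, y')) + ln (d (x', y)))"
      using arg_cong[OF e, of ln] pos by (simp add: ln_mult_pos del: mult_minus_left)
    then show ?thesis
      unfolding w_def by (simp add: algebra_simps add_divide_distrib diff_divide_distrib)
  qed
  then have "(\<Sum>i<k. w (xs i, ys (\<sigma> i))) = (\<Sum>i<k. w (xs i, ys i))"
    using \<sigma> by (rule sum_permutes_exchangeable)
  then have "(\<Sum>i<k. ln (d (xs i, ys i)))
      = - rematch_gain c k xs ys \<sigma> / \<epsilon> + (\<Sum>i<k. ln (d (xs i, ys (\<sigma> i))))"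
    by (simp add: w_def rematch_gain_def sum.distrib sum_divide_distrib diff_divide_distrib)
  moreover have prod_eq_exp: "(\<Prod>i<k. f i) = exp (\<Sum>i<k. ln (f i))" if "\<And>i. f i > 0" for f :: "nat \<Rightarrow> real"
    using that by (simp add: exp_sum)
  ultimately show ?thesis
    using pos by (simp add: prod_eq_exp[of "\<lambda>i. d (xs i, ys i)"] prod_eq_exp[of "\<lambda>i. d (xs i, ys (\<sigma> i))"]
        mult_exp_exp)
qed

lemma nn_integral_PiM_prod_permuted:
  fixes M1 :: "'a measure" and M2 :: "'b measure" and k :: nat
  assumes "sigma_finite_measure M1" and "sigma_finite_measure M2"
    and h: "\<And>i. i < k \<Longrightarrow> h i \<in> borel_measurable (M1 \<Otimes>\<^sub>M M2)"
    and \<sigma>: "\<sigma> permutes {..<k}"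
  shows "(\<integral>\<^sup>+xs. \<integral>\<^sup>+ys. (\<Prod>i<k. h i (xs i, ys (\<sigma> i))) \<partial>PiM {..<k} (\<lambda>_. M2) \<partial>PiM {..<k} (\<lambda>_. M1))
       = (\<Prod>i<k. \<integral>\<^sup>+z. h i z \<partial>(M1 \<Otimes>\<^sub>M M2))"
proof -
  interpret M1: sigma_finite_measure M1 by fact
  interpret M2: sigma_finite_measure M2 by fact
  interpret P1: product_sigma_finite "\<lambda>_. M1" by unfold_locales
  interpret P2: product_sigma_finite "\<lambda>_. M2" by unfold_locales
  have inv\<sigma>: "inv \<sigma> permutes {..<k}"
    using \<sigma> by (rule permutes_inv)
  have inner: "(\<integral>\<^sup>+ys. (\<Prod>i<k. h i (xs i, ys (\<sigma> i))) \<partial>PiM {..<k} (\<lambda>_. M2))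
      = (\<Prod>i<k. \<integral>\<^sup>+y. h i (xs i, y) \<partial>M2)" if xs: "xs \<in> space (PiM {..<k} (\<lambda>_. M1))" for xs
  proof -
    have reindex: "(\<Prod>i<k. h i (xs i, ys (\<sigma> i))) = (\<Prod>j<k. h (inv \<sigma> j) (xs (inv \<sigma> j), ys j))" for ys
      using prod.permute[OF inv\<sigma>, of "\<lambda>i. h i (xs i, ys (\<sigma> i))"] permutes_inverses(1)[OF \<sigma>]
      by (simp add: comp_def)
    have "(\<integral>\<^sup>+ys. (\<Prod>j<k. h (inv \<sigma> j) (xs (inv \<sigma> j), ys j)) \<partial>PiM {..<k} (\<lambda>_. M2))
        = (\<Prod>j<k. \<integral>\<^sup>+y. h (inv \<sigma> j) (xs (inv \<sigma> j), y) \<partial>M2)"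
    proof (rule P2.product_nn_integral_prod)
      fix j assume "j \<in> {..<k}"
      then have "inv \<sigma> j < k"
        using permutes_in_image[OF inv\<sigma>] by auto
      then show "(\<lambda>y. h (inv \<sigma> j) (xs (inv \<sigma> j), y)) \<in> borel_measurable M2"
        using xs h by (auto simp: space_PiM intro: measurable_compose_Pair1)
    qed simp
    also have "\<dots> = (\<Prod>i<k. \<integral>\<^sup>+y. h i (xs i, y) \<partial>M2)"
      using prod.permute[OF inv\<sigma>, of "\<lambda>i. \<integral>\<^sup>+y. h i (xs i, y) \<partial>M2"] by (simp add: comp_def)
    finally show ?thesis
      by (simp only: reindex)
  qed
  have "(\<integral>\<^sup>+xs. \<integral>\<^sup>+ys. (\<Prod>i<k. h i (xs i, ys (\<sigma> i))) \<partial>PiM {..<k} (\<lambda>_. M2) \<partial>PiM {..<k} (\<lambda>_. M1))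
      = (\<integral>\<^sup>+xs. (\<Prod>i<k. (\<lambda>x. \<integral>\<^sup>+y. h i (x, y) \<partial>M2) (xs i)) \<partial>PiM {..<k} (\<lambda>_. M1))"
    by (rule nn_integral_cong) (simp add: inner)
  also have "\<dots> = (\<Prod>i<k. \<integral>\<^sup>+x. \<integral>\<^sup>+y. h i (x, y) \<partial>M2 \<partial>M1)"
    by (rule P1.product_nn_integral_prod) (auto intro: M2.borel_measurable_nn_integral_fst h)
  also have "\<dots> = (\<Prod>i<k. \<integral>\<^sup>+z. h i z \<partial>(M1 \<Otimes>\<^sub>M M2))"
    by (rule prod.cong) (auto intro: M2.nn_integral_fst h)
  finally show ?thesis .
qed

lemma prod_emeasure_density_le:
  fixes M1 :: "'a measure" and M2 :: "'b measure" and k :: nat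
  assumes "sigma_finite_measure M1" and "sigma_finite_measure M2"
    and [measurable]: "f \<in> borel_measurable (M1 \<Otimes>\<^sub>M M2)" "\<And>i. B i \<in> sets (M1 \<Otimes>\<^sub>M M2)"
    and \<sigma>: "\<sigma> permutes {..<k}"
    and le: "\<And>xs ys. (\<Prod>i<k. f (xs i, ys i) * indicator (B i) (xs i, ys i)) \<le> (\<Prod>i<k. a * f (xs i, ys (\<sigma> i)))"
  shows "(\<Prod>i<k. emeasure (density (M1 \<Otimes>\<^sub>M M2) f) (B i)) \<le> (a * (\<integral>\<^sup>+z. f z \<partial>(M1 \<Otimes>\<^sub>M M2))) ^ k"
proof -
  have "(\<Prod>i<k. emeasure (density (M1 \<Otimes>\<^sub>M M2) f) (B i))
      = (\<Prod>i<k. \<integral>\<^sup>+z. f z * indicator (B i) z \<partial>(M1 \<Otimes>\<^sub>M M2))"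
    by (simp add: emeasure_density)
  also have "\<dots> = (\<integral>\<^sup>+xs. \<integral>\<^sup>+ys. (\<Prod>i<k. f (xs i, ys (id i)) * indicator (B i) (xs i, ys (id i)))
      \<partial>PiM {..<k} (\<lambda>_. M2) \<partial>PiM {..<k} (\<lambda>_. M1))"
    by (rule nn_integral_PiM_prod_permuted[OF assms(1,2) _ permutes_id, symmetric]) simp
  also have "\<dots> \<le> (\<integral>\<^sup>+xs. \<integral>\<^sup>+ys. (\<Prod>i<k. a * f (xs i, ys (\<sigma> i))) \<partial>PiM {..<k} (\<lambda>_. M2) \<partial>PiM {..<k} (\<lambda>_. M1))"
    using le by (intro nn_integral_mono) simp
  also have "\<dots> = (\<Prod>i<k. \<integral>\<^sup>+z. a * f z \<partial>(M1 \<Otimes>\<^sub>M M2))"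
    by (rule nn_integral_PiM_prod_permuted[OF assms(1,2) _ \<sigma>]) simp
  also have "\<dots> = (a * (\<integral>\<^sup>+z. f z \<partial>(M1 \<Otimes>\<^sub>M M2))) ^ k"
    by (simp add: nn_integral_cmult)
  finally show ?thesis .
qed

lemma prod_ennreal_indicator_le:
  fixes k :: nat and f g :: "nat \<Rightarrow> real"
  assumes "\<And>i. i < k \<Longrightarrow> 0 \<le> f i" and "\<And>i. i < k \<Longrightarrow> 0 \<le> g i"
    and "(\<And>i. i < k \<Longrightarrow> x i \<in> B i) \<Longrightarrow> (\<Prod>i<k. f i) \<le> (\<Prod>i<k. g i)"
  shows "(\<Prod>i<k. ennreal (f i) * indicator (B i) (x i)) \<le> (\<Prod>i<k. ennreal (g i))"
proof (cases "\<forall>i<k. x i \<in> B i")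
  case True
  then have "(\<Prod>i<k. ennreal (f i) * indicator (B i) (x i)) = (\<Prod>i<k. ennreal (f i))"
    by simp
  also have "\<dots> = ennreal (\<Prod>i<k. f i)"
    using assms(1) by (intro prod_ennreal) simp
  also have "\<dots> \<le> ennreal (\<Prod>i<k. g i)"
    using True assms(3) by (intro ennreal_leI) auto
  also have "\<dots> = (\<Prod>i<k. ennreal (g i))"
    using assms(2) by (intro prod_ennreal[symmetric]) simp
  finally show ?thesis .
next
  case False
  then obtain j where "j < k" "x j \<notin> B j"
    by auto
  then have "(\<Prod>i<k. ennreal (f i) * indicator (B i) (x i)) = 0"
    by (intro prod_zero) (auto intro!: bexI[of _ j])
  then show ?thesis
    by (metis zero_le)
qed

lemma cyc_invariant_densityE:
  assumes "cyc_invariant c \<epsilon> \<mu> \<nu> \<pi>" and "prob_space \<pi>"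
  obtains d where "d \<in> borel_measurable (\<mu> \<Otimes>\<^sub>M \<nu>)" and "\<And>z. d z > 0"
    and "\<pi> = density (\<mu> \<Otimes>\<^sub>M \<nu>) (\<lambda>z. ennreal (d z))"
    and "(\<integral>\<^sup>+z. ennreal (d z) \<partial>(\<mu> \<Otimes>\<^sub>M \<nu>)) = 1"
    and "\<And>k xs ys \<sigma>. \<sigma> permutes {..<k} \<Longrightarrow>
           (\<Prod>i<k. d (xs i, ys i)) = exp (- rematch_gain c k xs ys \<sigma> / \<epsilon>) * (\<Prod>i<k. d (xs i, ys (\<sigma> i)))"
proof -
  interpret \<pi>: prob_space \<pi> by fact
  obtain d where d_meas: "d \<in> borel_measurable (\<mu> \<Otimes>\<^sub>M \<nu>)" and d_pos: "\<forall>z. d z > 0"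
    and \<pi>_eq: "\<pi> = density (\<mu> \<Otimes>\<^sub>M \<nu>) (\<lambda>z. ennreal (d z))"
    and cyc: "\<forall>(k::nat) (xs :: nat \<Rightarrow> _) (ys :: nat \<Rightarrow> _). k \<ge> 1 \<longrightarrow>
           (\<Prod>i<k. d (xs i, ys i)) =
             exp (- (1 / \<epsilon>) * ((\<Sum>i<k. c (xs i, ys i)) - (\<Sum>i<k. c (xs i, ys (Suc i mod k)))))
             * (\<Prod>i<k. d (xs i, ys (Suc i mod k)))"
    using assms(1) unfolding cyc_invariant_def by blast
  have "(\<integral>\<^sup>+z. ennreal (d z) \<partial>(\<mu> \<Otimes>\<^sub>M \<nu>))
      = (\<integral>\<^sup>+z. ennreal (d z) * indicator (space (\<mu> \<Otimes>\<^sub>M \<nu>)) z \<partial>(\<mu> \<Otimes>\<^sub>M \<nu>))"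
    by (intro nn_integral_cong) simp
  also have "\<dots> = 1"
    using \<pi>.emeasure_space_1 d_meas by (simp add: \<pi>_eq emeasure_density)
  finally have mass: "(\<integral>\<^sup>+z. ennreal (d z) \<partial>(\<mu> \<Otimes>\<^sub>M \<nu>)) = 1" .
  show ?thesis
  proof (rule that[OF d_meas _ \<pi>_eq mass])
    show "d z > 0" for z
      using d_pos by blast
  qed (rule cyclic_density_permutes[OF d_pos cyc])
qed

text \<open>A gain of at least \<open>g\<close> on the product of the sets \<open>B i\<close> makes the identity matching
  \<open>exp (g / \<epsilon>)\<close> times less likely than the matching \<open>\<sigma>\<close>, whose total mass is \<open>1\<close>.\<close>
lemma cyc_invariant_prod_measure_le:
  fixes k :: nat
  assumes "prob_space \<mu>" and "prob_space \<nu>" and "prob_space \<pi>"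
    and "cyc_invariant c \<epsilon> \<mu> \<nu> \<pi>" and "\<epsilon> > 0" and \<sigma>: "\<sigma> permutes {..<k}"
    and B: "\<And>i. B i \<in> sets (\<mu> \<Otimes>\<^sub>M \<nu>)"
    and gain: "\<And>xs ys. (\<And>i. i < k \<Longrightarrow> (xs i, ys i) \<in> B i) \<Longrightarrow> g \<le> rematch_gain c k xs ys \<sigma>"
  shows "(\<Prod>i<k. measure \<pi> (B i)) \<le> exp (- g / \<epsilon>)"
proof (cases "k = 0")
  case True
  then have "g \<le> 0"
    using gain[of undefined undefined] by (simp add: rematch_gain_def)
  with True \<open>\<epsilon> > 0\<close> show ?thesis
    by (simp add: divide_nonpos_pos)
next
  case False
  interpret \<pi>: prob_space \<pi> by fact
  obtain d where d_meas: "d \<in> borel_measurable (\<mu> \<Otimes>\<^sub>M \<nu>)" and d_pos: "\<And>z. d z > 0"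
    and \<pi>_eq: "\<pi> = density (\<mu> \<Otimes>\<^sub>M \<nu>) (\<lambda>z. ennreal (d z))"
    and d_mass: "(\<integral>\<^sup>+z. ennreal (d z) \<partial>(\<mu> \<Otimes>\<^sub>M \<nu>)) = 1"
    and permute: "\<And>k xs ys \<sigma>. \<sigma> permutes {..<k} \<Longrightarrow>
           (\<Prod>i<k. d (xs i, ys i)) = exp (- rematch_gain c k xs ys \<sigma> / \<epsilon>) * (\<Prod>i<k. d (xs i, ys (\<sigma> i)))"
    by (rule cyc_invariant_densityE[OF assms(4,3)]) (rule that)
  have d_nonneg: "0 \<le> d z" for z
    using d_pos by (simp add: less_imp_le)
  \<comment> \<open>the \<open>k\<close>-th root of the bound, so that it can be distributed over the \<open>k\<close> factors\<close>
  define e where "e = exp (- g / (\<epsilon> * k))"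
  have e_pos: "e > 0" by (simp add: e_def)
  have e_pow: "e ^ k = exp (- g / \<epsilon>)"
    using False by (simp add: e_def flip: exp_of_nat_mult)
  have pointwise: "(\<Prod>i<k. ennreal (d (xs i, ys i)) * indicator (B i) (xs i, ys i))
      \<le> (\<Prod>i<k. ennreal (e * d (xs i, ys (\<sigma> i))))" for xs ys
  proof (rule prod_ennreal_indicator_le)
    assume "\<And>i. i < k \<Longrightarrow> (xs i, ys i) \<in> B i"
    then have "g \<le> rematch_gain c k xs ys \<sigma>"
      by (rule gain)
    have "(\<Prod>i<k. d (xs i, ys i)) = exp (- rematch_gain c k xs ys \<sigma> / \<epsilon>) * (\<Prod>i<k. d (xs i, ys (\<sigma> i)))"
      using \<sigma> by (rule permute)
    also have "\<dots> \<le> e ^ k * (\<Prod>i<k. d (xs i, ys (\<sigma> i)))"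
      using \<open>g \<le> rematch_gain c k xs ys \<sigma>\<close> \<open>\<epsilon> > 0\<close> d_nonneg
      by (intro mult_right_mono prod_nonneg) (auto simp: e_pow divide_right_mono)
    finally show "(\<Prod>i<k. d (xs i, ys i)) \<le> (\<Prod>i<k. e * d (xs i, ys (\<sigma> i)))"
      by (simp add: prod.distrib)
  qed (use e_pos d_nonneg in auto)
  have "ennreal (e * d z) = ennreal e * ennreal (d z)" for z
    using e_pos d_nonneg by (simp add: ennreal_mult)
  then have "(\<Prod>i<k. emeasure \<pi> (B i)) \<le> (ennreal e * (\<integral>\<^sup>+z. ennreal (d z) \<partial>(\<mu> \<Otimes>\<^sub>M \<nu>))) ^ k"
    unfolding \<pi>_eq
    using prob_space_imp_sigma_finite[OF assms(1)] prob_space_imp_sigma_finite[OF assms(2)] d_meas B \<sigma> pointwise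
    by (intro prod_emeasure_density_le) auto
  then show ?thesis
    using d_mass e_pos e_pow by (simp add: \<pi>.emeasure_eq_measure prod_ennreal ennreal_power)
qed

lemma integral_tent_bounds:
  fixes p :: "'c::metric_space"
  assumes "prob_space M" and sets: "sets M = sets borel" and r: "r > 0"
  shows "r / 2 * measure M (ball p (r / 2)) \<le> (\<integral>z. max 0 (r - dist z p) \<partial>M)"
    and "(\<integral>z. max 0 (r - dist z p) \<partial>M) \<le> r * measure M (ball p r)"
proof -
  interpret prob_space M by fact
  have "(\<lambda>z. max 0 (r - dist z p)) \<in> borel_measurable M"
    unfolding measurable_cong_sets[OF sets refl] by (intro borel_measurable_continuous_onI continuous_intros)
  then have tent: "integrable M (\<lambda>z. max 0 (r - dist z p))"
    using r by (intro integrable_const_bound[where B=r]) auto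
  have ball: "integrable M (\<lambda>z. s * indicator (ball p t) z :: real)" for s t
    using sets by (intro integrable_mult_right integrable_real_indicator) (auto simp: emeasure_eq_measure)
  have "r / 2 * measure M (ball p (r / 2)) = (\<integral>z. r / 2 * indicator (ball p (r / 2)) z \<partial>M)"
    using sets by simp
  also have "\<dots> \<le> (\<integral>z. max 0 (r - dist z p) \<partial>M)"
    using r by (intro integral_mono ball tent) (auto simp: dist_commute indicator_def)
  finally show "r / 2 * measure M (ball p (r / 2)) \<le> (\<integral>z. max 0 (r - dist z p) \<partial>M)" .
  have "(\<integral>z. max 0 (r - dist z p) \<partial>M) \<le> (\<integral>z. r * indicator (ball p r) z \<partial>M)"
    using r by (intro integral_mono ball tent) (auto simp: dist_commute indicator_def)
  also have "\<dots> = r * measure M (ball p r)"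
    using sets by simp
  finally show "(\<integral>z. max 0 (r - dist z p) \<partial>M) \<le> r * measure M (ball p r)" .
qed

text \<open>Test the weak convergence against the tent function \<open>max 0 (r - dist z p)\<close>.\<close>
lemma weak_conv_at0_ball_lower_bound:
  fixes \<pi> :: "real \<Rightarrow> 'c::metric_space measure"
  assumes wc: "weak_conv_at0 \<pi> \<pi>s" and "prob_space \<pi>s" and "sets \<pi>s = sets borel"
    and \<pi>: "\<forall>\<epsilon>>0. prob_space (\<pi> \<epsilon>) \<and> sets (\<pi> \<epsilon>) = sets borel"
    and p: "p \<in> spt \<pi>s" and r: "r > 0"
  shows "\<exists>L>0. eventually (\<lambda>\<epsilon>. L \<le> measure (\<pi> \<epsilon>) (ball p r)) (at_right 0)"
proof -
  interpret \<pi>s: prob_space \<pi>s by fact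
  define f where "f z = max 0 (r - dist z p)" for z
  have "emeasure \<pi>s (ball p (r / 2)) > 0"
    using p r by (simp add: spt_def)
  then have "0 < r / 2 * measure \<pi>s (ball p (r / 2))"
    using r by (simp add: \<pi>s.emeasure_eq_measure)
  also have "\<dots> \<le> integral\<^sup>L \<pi>s f"
    unfolding f_def using assms(2,3) r by (rule integral_tent_bounds)
  finally have f_pos: "integral\<^sup>L \<pi>s f > 0" .
  have "continuous_on UNIV f" and "bounded (range f)"
    unfolding f_def bounded_iff using r by (auto intro!: continuous_intros exI[of _ r])
  then have "((\<lambda>\<epsilon>. integral\<^sup>L (\<pi> \<epsilon>) f) \<longlongrightarrow> integral\<^sup>L \<pi>s f) (at_right 0)"
    using wc unfolding weak_conv_at0_def by simp
  then have "eventually (\<lambda>\<epsilon>. integral\<^sup>L (\<pi> \<epsilon>) f > integral\<^sup>L \<pi>s f / 2) (at_right 0)"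
    using f_pos by (intro order_tendstoD(1)) auto
  moreover have "eventually (\<lambda>\<epsilon>. \<epsilon> > (0::real)) (at_right 0)"
    by (simp add: eventually_at_right_less)
  ultimately have "eventually (\<lambda>\<epsilon>. integral\<^sup>L \<pi>s f / (2 * r) \<le> measure (\<pi> \<epsilon>) (ball p r)) (at_right 0)"
  proof eventually_elim
    case (elim \<epsilon>)
    then have "integral\<^sup>L (\<pi> \<epsilon>) f \<le> r * measure (\<pi> \<epsilon>) (ball p r)"
      unfolding f_def using \<pi> r by (intro integral_tent_bounds) auto
    with elim(1) r show ?case
      by (simp add: field_simps)
  qed
  then show ?thesis
    using f_pos r by (intro exI[of _ "integral\<^sup>L \<pi>s f / (2 * r)"]) simp
qed

lemma continuous_on_finite_modulus:
  fixes f :: "'a::metric_space \<times> 'b::metric_space \<Rightarrow> real"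
  assumes "continuous_on UNIV f" and "finite P" and "\<eta> > 0"
  obtains r where "r > 0"
    and "\<And>x y x' y'. (x, y) \<in> P \<Longrightarrow> dist x' x < r \<Longrightarrow> dist y' y < r \<Longrightarrow> \<bar>f (x', y') - f (x, y)\<bar> < \<eta>"
proof -
  have "\<forall>p. \<exists>s>0. \<forall>z. dist z p < s \<longrightarrow> dist (f z) (f p) < \<eta>"
    using assms(1,3) unfolding continuous_on_iff by blast
  then obtain s where s: "\<And>p. s p > 0" "\<And>p z. dist z p < s p \<Longrightarrow> dist (f z) (f p) < \<eta>"
    by metis
  define r where "r = Min (insert 1 (s ` P)) / 2"
  have "r > 0"
    using assms(2) s(1) by (simp add: r_def)
  moreover have "\<bar>f (x', y') - f (x, y)\<bar> < \<eta>" if "(x, y) \<in> P" "dist x' x < r" "dist y' y < r" for x y x' y'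
  proof -
    have "2 * r \<le> s (x, y)"
      using assms(2) that(1) by (simp add: r_def)
    moreover have "dist (x', y') (x, y) \<le> dist x' x + dist y' y"
      unfolding dist_Pair_Pair using sqrt_sum_squares_le_sum_abs[of "dist x' x" "dist y' y"] by simp
    ultimately have "dist (x', y') (x, y) < s (x, y)"
      using that(2,3) by linarith
    then show ?thesis
      using s(2) by (simp add: dist_real_def)
  qed
  ultimately show ?thesis
    using that by blast
qed

lemma rematch_gain_perturb:
  fixes c :: "'a::metric_space \<times> 'b::metric_space \<Rightarrow> real"
  assumes "continuous_on UNIV c" and \<sigma>: "\<sigma> permutes {..<k}" and "\<eta> > 0"
  obtains r where "r > 0"
    and "\<And>xs' ys'. (\<And>i. i < k \<Longrightarrow> dist (xs' i) (xs i) < r \<and> dist (ys' i) (ys i) < r)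
           \<Longrightarrow> rematch_gain c k xs ys \<sigma> - \<eta> \<le> rematch_gain c k xs' ys' \<sigma>"
proof -
  define P where "P = (\<lambda>(i, j). (xs i, ys j)) ` ({..<k} \<times> {..<k})"
  obtain r where r: "r > 0"
    and near: "\<And>x y x' y'. (x, y) \<in> P \<Longrightarrow> dist x' x < r \<Longrightarrow> dist y' y < r
                 \<Longrightarrow> \<bar>c (x', y') - c (x, y)\<bar> < \<eta> / (2 * (k + 1))"
    using continuous_on_finite_modulus[OF assms(1), of P "\<eta> / (2 * (k + 1))"] assms(3)
    by (auto simp: P_def)
  have "rematch_gain c k xs ys \<sigma> - \<eta> \<le> rematch_gain c k xs' ys' \<sigma>"
    if close: "\<And>i. i < k \<Longrightarrow> dist (xs' i) (xs i) < r \<and> dist (ys' i) (ys i) < r" for xs' ys'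
  proof -
    let ?\<eta> = "\<eta> / (2 * (k + 1))"
    have near_pairs: "\<bar>c (xs' i, ys' j) - c (xs i, ys j)\<bar> < ?\<eta>" if "i < k" "j < k" for i j
      using that close by (intro near) (auto simp: P_def)
    then have near_pairs: "c (xs i, ys j) - c (xs' i, ys' j) \<le> ?\<eta>" "c (xs' i, ys' j) - c (xs i, ys j) \<le> ?\<eta>"
      if "i < k" "j < k" for i j
      using near_pairs[OF that] by (auto simp: abs_less_iff)
    have \<sigma>_lt: "\<sigma> i < k" if "i < k" for i
      using permutes_in_image[OF \<sigma>] that by simp
    have "(\<Sum>i<k. c (xs i, ys i)) - (\<Sum>i<k. c (xs' i, ys' i)) \<le> (\<Sum>i<k. ?\<eta>)"
      unfolding sum_subtractf[symmetric]
      using near_pairs(1) by (intro sum_mono) simp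
    moreover have "(\<Sum>i<k. c (xs' i, ys' (\<sigma> i))) - (\<Sum>i<k. c (xs i, ys (\<sigma> i))) \<le> (\<Sum>i<k. ?\<eta>)"
      unfolding sum_subtractf[symmetric]
      using near_pairs(2) \<sigma>_lt by (intro sum_mono) simp
    moreover have "(\<Sum>i<k. ?\<eta>) \<le> \<eta> / 2"
      using assms(3) by (simp add: field_simps)
    ultimately show ?thesis
      unfolding rematch_gain_def by linarith
  qed
  with r that show ?thesis by blast
qed

lemma eventually_exp_less_prod:
  fixes f :: "nat \<Rightarrow> real \<Rightarrow> real"
  assumes "\<delta> > 0" and "\<And>i. i < k \<Longrightarrow> \<exists>L>0. eventually (\<lambda>\<epsilon>. L \<le> f i \<epsilon>) (at_right 0)"
  shows "eventually (\<lambda>\<epsilon>. exp (- \<delta> / \<epsilon>) < (\<Prod>i<k. f i \<epsilon>)) (at_right 0)"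
proof -
  obtain L where L: "\<And>i. i < k \<Longrightarrow> L i > 0"
    and L_ev: "\<And>i. i < k \<Longrightarrow> eventually (\<lambda>\<epsilon>. L i \<le> f i \<epsilon>) (at_right 0)"
    using assms(2) by metis
  have "((\<lambda>\<epsilon>. exp (- \<delta> / \<epsilon>)) \<longlongrightarrow> 0) (at_right 0)"
    using \<open>\<delta> > 0\<close> by real_asymp
  moreover have "0 < (\<Prod>i<k. L i)"
    using L by (intro prod_pos) simp
  ultimately have "eventually (\<lambda>\<epsilon>. exp (- \<delta> / \<epsilon>) < (\<Prod>i<k. L i)) (at_right 0)"
    by (rule order_tendstoD(2))
  moreover have "eventually (\<lambda>\<epsilon>. \<forall>i\<in>{..<k}. L i \<le> f i \<epsilon>) (at_right 0)"
    using L_ev by (intro eventually_ball_finite) auto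
  ultimately show ?thesis
  proof eventually_elim
    case (elim \<epsilon>)
    have "(\<Prod>i<k. L i) \<le> (\<Prod>i<k. f i \<epsilon>)"
      using L elim(2) by (intro prod_mono) (auto intro: less_imp_le)
    with elim(1) show ?case
      by linarith
  qed
qed

lemma c_cyclically_monotone_spt:
  fixes \<mu> :: "'a::polish_space measure" and \<nu> :: "'b::polish_space measure"
    and \<pi> :: "real \<Rightarrow> ('a \<times> 'b) measure"
  assumes "prob_space \<mu>" and "sets \<mu> = sets borel" and "prob_space \<nu>" and "sets \<nu> = sets borel"
    and "continuous_on UNIV c"
    and \<pi>: "\<forall>\<epsilon>>0. \<pi> \<epsilon> \<in> couplings \<mu> \<nu> \<and> cyc_invariant c \<epsilon> \<mu> \<nu> (\<pi> \<epsilon>)"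
    and "\<pi>s \<in> couplings \<mu> \<nu>" and "weak_conv_at0 \<pi> \<pi>s"
  shows "c_cyclically_monotone c (spt \<pi>s)"
  unfolding c_cyclically_monotone_def
proof (intro allI impI, elim conjE, rule ccontr)
  fix k xs ys \<sigma>
  assume \<sigma>: "\<sigma> permutes {..<k}" and spt: "\<forall>i<k. (xs i, ys i) \<in> spt \<pi>s"
    and "\<not> rematch_gain c k xs ys \<sigma> \<le> 0"
  define \<delta> where "\<delta> = rematch_gain c k xs ys \<sigma>"
  with \<open>\<not> rematch_gain c k xs ys \<sigma> \<le> 0\<close> have \<delta>: "\<delta> > 0" by simp
  obtain r where r: "r > 0"
    and near: "\<And>xs' ys'. (\<And>i. i < k \<Longrightarrow> dist (xs' i) (xs i) < r \<and> dist (ys' i) (ys i) < r)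
                 \<Longrightarrow> \<delta> - \<delta> / 2 \<le> rematch_gain c k xs' ys' \<sigma>"
    using rematch_gain_perturb[OF assms(5) \<sigma>, where \<eta> = "\<delta> / 2" and xs = xs and ys = ys] \<delta>
    unfolding \<delta>_def by auto
  define B where "B i = ball (xs i, ys i) r" for i
  have gain: "\<delta> / 2 \<le> rematch_gain c k xs' ys' \<sigma>" if "\<And>i. i < k \<Longrightarrow> (xs' i, ys' i) \<in> B i" for xs' ys'
  proof -
    have "dist (xs' i) (xs i) < r \<and> dist (ys' i) (ys i) < r" if "i < k" for i
      using \<open>i < k \<Longrightarrow> (xs' i, ys' i) \<in> B i\<close> that
        dist_fst_le[of "(xs' i, ys' i)" "(xs i, ys i)"] dist_snd_le[of "(xs' i, ys' i)" "(xs i, ys i)"]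
      by (auto simp: B_def dist_commute)
    then have "\<delta> - \<delta> / 2 \<le> rematch_gain c k xs' ys' \<sigma>"
      by (rule near)
    then show ?thesis
      by simp
  qed
  have \<pi>s: "prob_space \<pi>s" "sets \<pi>s = sets borel"
    and \<pi>_prob: "\<forall>\<epsilon>>0. prob_space (\<pi> \<epsilon>) \<and> sets (\<pi> \<epsilon>) = sets borel"
    using assms(7) \<pi> by (auto simp: couplings_def)
  have "eventually (\<lambda>\<epsilon>. exp (- (\<delta> / 2) / \<epsilon>) < (\<Prod>i<k. measure (\<pi> \<epsilon>) (B i))) (at_right 0)"
    using \<delta> spt unfolding B_def
    by (intro eventually_exp_less_prod weak_conv_at0_ball_lower_bound[OF assms(8) \<pi>s \<pi>_prob _ r]) auto
  moreover have "eventually (\<lambda>\<epsilon>. \<epsilon> > (0::real)) (at_right 0)"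
    by (simp add: eventually_at_right_less)
  ultimately obtain \<epsilon> where small: "exp (- (\<delta> / 2) / \<epsilon>) < (\<Prod>i<k. measure (\<pi> \<epsilon>) (B i))"
    and "\<epsilon> > 0"
    using eventually_happens'[OF trivial_limit_at_right_real eventually_conj] by blast
  have "sets (\<mu> \<Otimes>\<^sub>M \<nu>) = sets borel"
    using sets_pair_measure_cong[OF assms(2,4)] by (simp only: borel_prod)
  then have "(\<Prod>i<k. measure (\<pi> \<epsilon>) (B i)) \<le> exp (- (\<delta> / 2) / \<epsilon>)"
    using assms(1,3) \<pi> \<pi>_prob \<open>\<epsilon> > 0\<close> \<sigma> gain
    by (intro cyc_invariant_prod_measure_le[where \<mu> = \<mu> and \<nu> = \<nu>]) (auto simp: B_def)
  with small show False
    by linarith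
qed

section \<open>The function \<open>I\<close> and Kantorovich potentials\<close>

definition unique_kantorovich_potentials :: "('a \<times> 'b \<Rightarrow> real) \<Rightarrow> ('a \<times> 'b) set \<Rightarrow> bool" where
  "unique_kantorovich_potentials c \<Gamma> \<longleftrightarrow>
     (\<forall>\<psi>1 \<psi>2. kantorovich_potential c \<Gamma> \<psi>1 \<and> kantorovich_potential c \<Gamma> \<psi>2 \<longrightarrow>
        (\<exists>C::real. \<forall>x \<in> fst ` \<Gamma>. \<psi>1 x = \<psi>2 x + ereal C))"

lemma rematch_gain_split_0:
  assumes "0 < k"
  shows "rematch_gain c k xs ys \<sigma> = c (xs 0, ys 0) - c (xs 0, ys (\<sigma> 0))
           + (\<Sum>i\<in>{1..<k}. c (xs i, ys i) - c (xs i, ys (\<sigma> i)))"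
  using assms by (simp add: rematch_gain_def lessThan_atLeast0 sum.atLeast_Suc_lessThan sum_subtractf)

lemma Ifun_upper:
  assumes "2 \<le> k" "xs 0 = x" "ys 0 = y" "\<forall>i\<in>{1..<k}. (xs i, ys i) \<in> \<Gamma>" "\<sigma> permutes {..<k}"
  shows "ereal (rematch_gain c k xs ys \<sigma>) \<le> Ifun c \<Gamma> x y"
  unfolding Ifun_def rematch_gain_def by (rule SUP_upper) (use assms in blast)

lemma Ifun_least:
  assumes "\<And>k xs ys \<sigma>. 2 \<le> k \<Longrightarrow> xs 0 = x \<Longrightarrow> ys 0 = y \<Longrightarrow> \<forall>i\<in>{1..<k}. (xs i, ys i) \<in> \<Gamma>
      \<Longrightarrow> \<sigma> permutes {..<k} \<Longrightarrow> ereal (rematch_gain c k xs ys \<sigma>) \<le> B"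
  shows "Ifun c \<Gamma> x y \<le> B"
  unfolding Ifun_def by (rule SUP_least) (use assms in \<open>auto simp: rematch_gain_def\<close>)

lemma Ifun_nonneg:
  assumes "p \<in> \<Gamma>"
  shows "0 \<le> Ifun c \<Gamma> x y"
proof -
  have "ereal (rematch_gain c 2 (\<lambda>i. if i = 0 then x else fst p) (\<lambda>i. if i = 0 then y else snd p) id)
      \<le> Ifun c \<Gamma> x y"
    by (rule Ifun_upper) (use assms in auto)
  then show ?thesis by (simp add: rematch_gain_def zero_ereal_def)
qed

lemma Ifun_nonpos_if_mem:
  assumes "c_cyclically_monotone c \<Gamma>" and "(x, y) \<in> \<Gamma>"
  shows "Ifun c \<Gamma> x y \<le> 0"
proof (rule Ifun_least)
  fix k :: nat and xs ys and \<sigma> :: "nat \<Rightarrow> nat"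
  assume "xs 0 = x" "ys 0 = y" and \<Gamma>: "\<forall>i\<in>{1..<k}. (xs i, ys i) \<in> \<Gamma>" and "\<sigma> permutes {..<k}"
  moreover have "(xs i, ys i) \<in> \<Gamma>" if "i < k" for i
    using calculation assms(2) that by (cases "i = 0") force+
  ultimately show "ereal (rematch_gain c k xs ys \<sigma>) \<le> 0"
    using assms(1) by (simp add: c_cyclically_monotone_def)
qed

text \<open>Appending the pair \<open>(x0, y0) \<in> \<Gamma>\<close> to a cycle through \<open>(x0, y)\<close>, and rerouting it through
  \<open>(x, y)\<close> and \<open>(x, y0)\<close>, changes its gain by the four-point expression below.\<close>
lemma Ifun_extend:
  assumes "(x0, y0) \<in> \<Gamma>"
  shows "Ifun c \<Gamma> x0 y + ereal (c (x, y) + c (x0, y0) - c (x, y0) - c (x0, y)) \<le> Ifun c \<Gamma> x y"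
proof -
  let ?\<Delta> = "c (x, y) + c (x0, y0) - c (x, y0) - c (x0, y)"
  have "Ifun c \<Gamma> x0 y \<le> Ifun c \<Gamma> x y - ereal ?\<Delta>"
  proof (rule Ifun_least)
    fix k :: nat and xs ys and \<sigma> :: "nat \<Rightarrow> nat"
    assume k: "2 \<le> k" and x0: "xs 0 = x0" and y: "ys 0 = y"
      and \<Gamma>: "\<forall>i\<in>{1..<k}. (xs i, ys i) \<in> \<Gamma>" and \<sigma>: "\<sigma> permutes {..<k}"
    define xs' where "xs' = xs(0 := x, k := x0)"
    define ys' where "ys' = ys(k := y0)"
    define \<sigma>' where "\<sigma>' = \<sigma> \<circ> Transposition.transpose 0 k"
    have \<sigma>_lt: "\<sigma> i < k" if "i < k" for i
      using permutes_in_image[OF \<sigma>] that by simp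
    have \<sigma>_k: "\<sigma> k = k"
      using permutes_not_in[OF \<sigma>, of k] by simp
    have \<sigma>': "\<sigma>' permutes {..<Suc k}"
      unfolding \<sigma>'_def
      by (rule permutes_compose[OF permutes_swap_id permutes_subset[OF \<sigma>]]) auto
    have "ereal (rematch_gain c (Suc k) xs' ys' \<sigma>') \<le> Ifun c \<Gamma> x y"
      by (rule Ifun_upper) (use k \<Gamma> assms \<sigma>' y in \<open>auto simp: xs'_def ys'_def less_Suc_eq\<close>)
    moreover have "rematch_gain c (Suc k) xs' ys' \<sigma>' = rematch_gain c k xs ys \<sigma> + ?\<Delta>"
    proof -
      have "(\<Sum>i\<in>{1..<k}. c (xs' i, ys' i) - c (xs' i, ys' (\<sigma>' i)))
          = (\<Sum>i\<in>{1..<k}. c (xs i, ys i) - c (xs i, ys (\<sigma> i)))"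
        using \<sigma>_lt by (intro sum.cong) (auto simp: xs'_def ys'_def \<sigma>'_def Transposition.transpose_def)
      moreover have "c (xs' k, ys' k) - c (xs' k, ys' (\<sigma>' k)) = c (x0, y0) - c (x0, ys (\<sigma> 0))"
        using \<sigma>_lt[of 0] k by (simp add: xs'_def ys'_def \<sigma>'_def)
      moreover have "xs' 0 = x" "ys' 0 = y" "ys' (\<sigma>' 0) = y0"
        using k y \<sigma>_k by (auto simp: xs'_def ys'_def \<sigma>'_def)
      ultimately show ?thesis
        using k x0 y by (simp add: rematch_gain_split_0)
    qed
    ultimately show "ereal (rematch_gain c k xs ys \<sigma>) \<le> Ifun c \<Gamma> x y - ereal ?\<Delta>"
      by (cases "Ifun c \<Gamma> x y") auto
  qed
  then show ?thesis
    by (cases "Ifun c \<Gamma> x0 y"; cases "Ifun c \<Gamma> x y") auto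
qed

definition Ifun_potential :: "('a \<times> 'b \<Rightarrow> real) \<Rightarrow> ('a \<times> 'b) set \<Rightarrow> 'b \<Rightarrow> 'a \<Rightarrow> ereal" where
  "Ifun_potential c \<Gamma> y x = Ifun c \<Gamma> x y - ereal (c (x, y))"

lemma c_conj_le: "c_conj c \<psi> y \<le> \<psi> x + ereal (c (x, y))"
  unfolding c_conj_def by (rule INF_lower) simp

lemma c_convexI_c_conj:
  assumes "\<And>x. \<psi> x \<noteq> -\<infinity>" and "\<psi> x0 \<noteq> \<infinity>"
    and "\<And>x. \<psi> x \<le> (SUP y. c_conj c \<psi> y - ereal (c (x, y)))"
  shows "c_convex c \<psi>"
proof -
  have "(SUP y. c_conj c \<psi> y - ereal (c (x, y))) \<le> \<psi> x" for x
  proof (intro SUP_least)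
    fix y
    show "c_conj c \<psi> y - ereal (c (x, y)) \<le> \<psi> x"
      using c_conj_le[of c \<psi> y x] by (cases "c_conj c \<psi> y"; cases "\<psi> x") auto
  qed
  then show ?thesis
    unfolding c_convex_def using assms by (metis order_antisym)
qed

lemma Ifun_potential_le_SUP_c_conj:
  "Ifun_potential c \<Gamma> y x \<le> (SUP y'. c_conj c (Ifun_potential c \<Gamma> y) y' - ereal (c (x, y')))"
    (is "_ \<le> ?S")
proof -
  have "Ifun c \<Gamma> x y \<le> ?S + ereal (c (x, y))"
  proof (rule Ifun_least)
    fix k :: nat and xs ys and \<sigma> :: "nat \<Rightarrow> nat"
    assume k: "2 \<le> k" and x: "xs 0 = x" and y: "ys 0 = y"
      and \<Gamma>: "\<forall>i\<in>{1..<k}. (xs i, ys i) \<in> \<Gamma>" and \<sigma>: "\<sigma> permutes {..<k}"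
    define y' where "y' = ys (\<sigma> 0)"
    define g where "g = rematch_gain c k xs ys \<sigma> - c (x, y) + c (x, y')"
    have "ereal g \<le> Ifun_potential c \<Gamma> y x'' + ereal (c (x'', y'))" for x''
    proof -
      have "ereal (rematch_gain c k (xs(0 := x'')) ys \<sigma>) \<le> Ifun c \<Gamma> x'' y"
        by (rule Ifun_upper) (use k y \<Gamma> \<sigma> in auto)
      moreover have "rematch_gain c k (xs(0 := x'')) ys \<sigma> = g + c (x'', y) - c (x'', y')"
        using k x y by (simp add: rematch_gain_split_0 g_def y'_def)
      ultimately show ?thesis
        unfolding Ifun_potential_def by (cases "Ifun c \<Gamma> x'' y") auto
    qed
    then have "ereal g \<le> c_conj c (Ifun_potential c \<Gamma> y) y'"
      unfolding c_conj_def by (rule INF_greatest)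
    moreover have "c_conj c (Ifun_potential c \<Gamma> y) y' - ereal (c (x, y')) \<le> ?S"
      by (rule SUP_upper) simp
    ultimately show "ereal (rematch_gain c k xs ys \<sigma>) \<le> ?S + ereal (c (x, y))"
      unfolding g_def by (cases "c_conj c (Ifun_potential c \<Gamma> y) y'"; cases ?S) auto
  qed
  moreover have "Ifun_potential c \<Gamma> y x = Ifun c \<Gamma> x y - ereal (c (x, y))"
    by (simp add: Ifun_potential_def)
  ultimately show ?thesis
    by (cases "Ifun c \<Gamma> x y"; cases ?S) auto
qed

lemma Ifun_potential_lower: "p \<in> \<Gamma> \<Longrightarrow> - ereal (c (x, y)) \<le> Ifun_potential c \<Gamma> y x"
  using Ifun_nonneg[of p \<Gamma> c x y] unfolding Ifun_potential_def by (cases "Ifun c \<Gamma> x y") auto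

lemma Ifun_potential_finite:
  assumes mono: "c_cyclically_monotone c \<Gamma>" and xb: "(xb, y) \<in> \<Gamma>" and "(x0, y0) \<in> \<Gamma>"
  obtains a where "Ifun_potential c \<Gamma> y x0 = ereal a"
proof -
  have "Ifun c \<Gamma> x0 y + ereal (c (xb, y) + c (x0, y0) - c (xb, y0) - c (x0, y)) \<le> Ifun c \<Gamma> xb y"
    using assms(3) by (rule Ifun_extend)
  also have "\<dots> \<le> 0"
    using mono xb by (rule Ifun_nonpos_if_mem)
  finally have "Ifun c \<Gamma> x0 y < \<infinity>"
    by (cases "Ifun c \<Gamma> x0 y") auto
  then show ?thesis
    using Ifun_potential_lower[OF xb, of c x0 y] that unfolding Ifun_potential_def
    by (cases "Ifun c \<Gamma> x0 y") auto
qed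

lemma c_conj_Ifun_potential:
  assumes "(x0, y0) \<in> \<Gamma>" and a: "Ifun_potential c \<Gamma> y x0 = ereal a"
  shows "c_conj c (Ifun_potential c \<Gamma> y) y0 = ereal (a + c (x0, y0))"
proof (rule antisym)
  show "c_conj c (Ifun_potential c \<Gamma> y) y0 \<le> ereal (a + c (x0, y0))"
    using c_conj_le[of c "Ifun_potential c \<Gamma> y" y0 x0] a by simp
  have "ereal (a + c (x0, y0)) \<le> Ifun_potential c \<Gamma> y x + ereal (c (x, y0))" for x
  proof -
    have "Ifun c \<Gamma> x0 y + ereal (c (x, y) + c (x0, y0) - c (x, y0) - c (x0, y)) \<le> Ifun c \<Gamma> x y"
      using assms(1) by (rule Ifun_extend)
    then show ?thesis
      using a unfolding Ifun_potential_def by (cases "Ifun c \<Gamma> x0 y"; cases "Ifun c \<Gamma> x y") auto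
  qed
  then show "ereal (a + c (x0, y0)) \<le> c_conj c (Ifun_potential c \<Gamma> y) y0"
    unfolding c_conj_def by (rule INF_greatest)
qed

lemma kantorovich_potential_Ifun_potential:
  assumes mono: "c_cyclically_monotone c \<Gamma>" and xb: "(xb, y) \<in> \<Gamma>"
  shows "kantorovich_potential c \<Gamma> (Ifun_potential c \<Gamma> y)"
proof -
  have "c_convex c (Ifun_potential c \<Gamma> y)"
  proof (rule c_convexI_c_conj)
    show "Ifun_potential c \<Gamma> y x \<noteq> -\<infinity>" for x
      using Ifun_potential_lower[OF xb, of c x y] by auto
    show "Ifun_potential c \<Gamma> y xb \<noteq> \<infinity>"
      using Ifun_potential_finite[OF mono xb xb] by (metis PInfty_neq_ereal(1))
  qed (rule Ifun_potential_le_SUP_c_conj)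
  moreover have "(x0, y0) \<in> c_subdiff c (Ifun_potential c \<Gamma> y)" if \<Gamma>: "(x0, y0) \<in> \<Gamma>" for x0 y0
  proof -
    obtain a where a: "Ifun_potential c \<Gamma> y x0 = ereal a"
      using Ifun_potential_finite[OF mono xb \<Gamma>] .
    then show ?thesis
      using c_conj_Ifun_potential[OF \<Gamma> a] unfolding c_subdiff_def by simp
  qed
  ultimately show ?thesis
    unfolding kantorovich_potential_def by auto
qed

lemma kantorovich_potential_finite:
  assumes "kantorovich_potential c \<Gamma> \<psi>" and "(x, y) \<in> \<Gamma>"
  obtains a where "\<psi> x = ereal a" and "c_conj c \<psi> y = ereal (a + c (x, y))"
proof -
  have "\<psi> x \<noteq> -\<infinity>" and "\<psi> x < \<infinity>" and eq: "c_conj c \<psi> y - \<psi> x = ereal (c (x, y))"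
    using assms unfolding kantorovich_potential_def c_convex_def c_subdiff_def by auto
  then obtain a where "\<psi> x = ereal a"
    by (cases "\<psi> x") auto
  with eq show ?thesis
    using that by (cases "c_conj c \<psi> y") auto
qed

lemma Ifun_eq_kantorovich_potential:
  assumes mono: "c_cyclically_monotone c \<Gamma>"
    and uniq: "unique_kantorovich_potentials c \<Gamma>"
    and \<psi>: "kantorovich_potential c \<Gamma> \<psi>" and x: "x \<in> fst ` \<Gamma>" and y: "y \<in> snd ` \<Gamma>"
  shows "Ifun c \<Gamma> x y = ereal (c (x, y)) - c_conj c \<psi> y + \<psi> x"
proof -
  obtain xb where xb: "(xb, y) \<in> \<Gamma>" using y by force
  obtain y1 where y1: "(x, y1) \<in> \<Gamma>" using x by force
  obtain b where b: "\<psi> xb = ereal b" "c_conj c \<psi> y = ereal (b + c (xb, y))"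
    using kantorovich_potential_finite[OF \<psi> xb] .
  obtain a where a: "\<psi> x = ereal a"
    using kantorovich_potential_finite[OF \<psi> y1] .
  obtain C where C: "\<forall>x' \<in> fst ` \<Gamma>. Ifun_potential c \<Gamma> y x' = \<psi> x' + ereal C"
    using uniq \<psi> kantorovich_potential_Ifun_potential[OF mono xb]
    unfolding unique_kantorovich_potentials_def by blast
  have "Ifun c \<Gamma> xb y = 0"
    using Ifun_nonpos_if_mem[OF mono xb] Ifun_nonneg[OF xb] by (rule antisym)
  then have "- c (xb, y) = b + C"
    using C xb b(1) by (force simp: Ifun_potential_def)
  moreover have "Ifun c \<Gamma> x y - ereal (c (x, y)) = ereal (a + C)"
    using bspec[OF C x] a by (simp add: Ifun_potential_def)
  ultimately show ?thesis
    using a b(2) by (cases "Ifun c \<Gamma> x y") auto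
qed

lemma Ifun_finite:
  assumes "c_cyclically_monotone c \<Gamma>"
    and "unique_kantorovich_potentials c \<Gamma>"
    and x: "x \<in> fst ` \<Gamma>" and y: "y \<in> snd ` \<Gamma>"
  shows "Ifun c \<Gamma> x y < \<infinity>"
proof -
  obtain xb where xb: "(xb, y) \<in> \<Gamma>" using y by force
  obtain y1 where y1: "(x, y1) \<in> \<Gamma>" using x by force
  have \<psi>: "kantorovich_potential c \<Gamma> (Ifun_potential c \<Gamma> y)"
    using assms(1) xb by (rule kantorovich_potential_Ifun_potential)
  obtain a where "Ifun_potential c \<Gamma> y x = ereal a"
    using kantorovich_potential_finite[OF \<psi> y1] .
  moreover obtain b where "c_conj c (Ifun_potential c \<Gamma> y) y = ereal b"
    using kantorovich_potential_finite[OF \<psi> xb] by metis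
  ultimately show ?thesis
    using Ifun_eq_kantorovich_potential[OF assms(1,2) \<psi> x y] by simp
qed

lemma Ifun_add_Ifun_exchange:
  assumes "c_cyclically_monotone c \<Gamma>"
    and "unique_kantorovich_potentials c \<Gamma>"
    and xy': "(x, y') \<in> \<Gamma>" and x'y: "(x', y) \<in> \<Gamma>"
  shows "Ifun c \<Gamma> x y + Ifun c \<Gamma> x' y' = ereal (c (x, y) + c (x', y') - c (x, y') - c (x', y))"
proof -
  have \<psi>: "kantorovich_potential c \<Gamma> (Ifun_potential c \<Gamma> y)"
    using assms(1) x'y by (rule kantorovich_potential_Ifun_potential)
  obtain a where a: "Ifun_potential c \<Gamma> y x = ereal a"
      "c_conj c (Ifun_potential c \<Gamma> y) y' = ereal (a + c (x, y'))"
    using kantorovich_potential_finite[OF \<psi> xy'] .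
  obtain a' where a': "Ifun_potential c \<Gamma> y x' = ereal a'"
      "c_conj c (Ifun_potential c \<Gamma> y) y = ereal (a' + c (x', y))"
    using kantorovich_potential_finite[OF \<psi> x'y] .
  have "x \<in> fst ` \<Gamma>" "x' \<in> fst ` \<Gamma>" "y \<in> snd ` \<Gamma>" "y' \<in> snd ` \<Gamma>"
    using xy' x'y by force+
  then show ?thesis
    using Ifun_eq_kantorovich_potential[OF assms(1,2) \<psi>] a a' by simp
qed

theorem proposition4p5:
  fixes \<mu> :: "'a::polish_space measure" and \<nu> :: "'b::polish_space measure"
    and c :: "'a \<times> 'b \<Rightarrow> real"
    and \<pi> :: "real \<Rightarrow> ('a \<times> 'b) measure" and \<pi>s :: "('a \<times> 'b) measure"
  assumes "prob_space \<mu>" and "sets \<mu> = sets borel"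
    and "prob_space \<nu>" and "sets \<nu> = sets borel"
    and "continuous_on UNIV c" and "\<forall>z. c z \<ge> 0"
    and "\<forall>\<epsilon>>0. \<pi> \<epsilon> \<in> couplings \<mu> \<nu> \<and> cyc_invariant c \<epsilon> \<mu> \<nu> (\<pi> \<epsilon>)"
    and "\<pi>s \<in> couplings \<mu> \<nu>" and "weak_conv_at0 \<pi> \<pi>s"
    and uniq: "\<forall>\<psi>1 \<psi>2. c_convex c \<psi>1 \<and> spt \<pi>s \<subseteq> c_subdiff c \<psi>1 \<and>
                       c_convex c \<psi>2 \<and> spt \<pi>s \<subseteq> c_subdiff c \<psi>2 \<longrightarrow>
                 (\<exists>C::real. \<forall>x \<in> fst ` spt \<pi>s. \<psi>1 x = \<psi>2 x + ereal C)"
  shows "(\<forall>\<psi>. kantorovich_potential c (spt \<pi>s) \<psi> \<longrightarrow>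
            (\<forall>x \<in> fst ` spt \<pi>s. \<forall>y \<in> snd ` spt \<pi>s.
               Ifun c (spt \<pi>s) x y = ereal (c (x, y)) - c_conj c \<psi> y + \<psi> x))
       \<and> (\<forall>x \<in> fst ` spt \<pi>s. \<forall>y \<in> snd ` spt \<pi>s. Ifun c (spt \<pi>s) x y < \<infinity>)
       \<and> (\<forall>x \<in> fst ` spt \<pi>s. \<forall>y \<in> snd ` spt \<pi>s. \<forall>x' \<in> fst ` spt \<pi>s. \<forall>y' \<in> snd ` spt \<pi>s.
            (x', y) \<in> spt \<pi>s \<and> (x, y') \<in> spt \<pi>s \<longrightarrow>
            Ifun c (spt \<pi>s) x y + Ifun c (spt \<pi>s) x' y' =
              ereal (c (x, y) + c (x', y') - c (x, y') - c (x', y)))"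
proof -
  have mono: "c_cyclically_monotone c (spt \<pi>s)"
    using assms(1-5,7-9) by (rule c_cyclically_monotone_spt)
  have unique: "unique_kantorovich_potentials c (spt \<pi>s)"
    using uniq unfolding unique_kantorovich_potentials_def kantorovich_potential_def by blast
  show ?thesis
    using Ifun_eq_kantorovich_potential[OF mono unique] Ifun_finite[OF mono unique]
      Ifun_add_Ifun_exchange[OF mono unique]
    by blast
qed

end
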